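(* Let $f$ be an entire function on $\mathbb{C}$. (1) For every entire function $g$ of $z$, $\Phi_{gf}=g(A(s))\Phi_f$; in particular $\Phi_f=f(A(s))\Phi_1$. (2) $$\Phi_{\partial_z f}(s)=-\nabla\Phi_f(s)+\Big(\sum_{h=0}^{k-1}(k-h)s_h\partial_{s_{h+1}}\Big)(\Phi_f)(s),$$ where $\nabla$ is the constant $(k,k)$ matrix with entries $\nabla_{i+1,i}=i$ for $i\in[1,k-1]$ and all other entries $0$.
   Context: Fix an integer $k\ge 2$. Use coordinates $s=(s_1,\dots,s_k)$ on $\mathbb{C}^k$, set $s_0:=1$, $P_s(z):=\sum_{h=0}^k(-1)^hs_hz^{k-h}$, $E(z):=(1,z,\dots,z^{k-1})^T$. For an entire $f$, $\Phi_f(s):=\frac{1}{2i\pi}\int_{|\zeta|=R}\frac{f(\zeta)E(\zeta)\,d\zeta}{P_s(\zeta)}$ with $R$ large enough that all roots of $P_s$ lie in $\{|\zeta|<R\}$; $1$ denotes the constant function $1$. $A(s)$ is the $(k,k)$ companion matrix with $A_{i,i+1}=1$ for $i\in[1,k-1]$, last row $A_{k,j}=(-1)^{k-j}s_{k+1-j}$ for $j\in[1,k]$, all other entries $0$; for an entire $g(z)=\sum_n a_nz^n$, $g(A(s)):=\sum_na_nA(s)^n$. *)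

theory Defs
  imports "HOL-Complex_Analysis.Complex_Analysis" "Jordan_Normal_Form.Matrix"
begin

text \<open>Coordinates s = (s_1,...,s_k) are given as a function s :: nat => complex
  (only s 1, ..., s k are used); the convention s_0 = 1 is built in by sc.\<close>

definition sc :: "(nat \<Rightarrow> complex) \<Rightarrow> nat \<Rightarrow> complex" where
  "sc s h = (if h = 0 then 1 else s h)"

definition Ps :: "nat \<Rightarrow> (nat \<Rightarrow> complex) \<Rightarrow> complex \<Rightarrow> complex" where
  "Ps k s z = (\<Sum>h=0..k. (-1)^h * sc s h * z^(k-h))"

text \<open>Phi_f(s), a vector of dimension k; component j (0-based) uses z^j, i.e. E(z).
  The radius R is any radius such that all roots of P_s lie in the open disc.\<close>

definition Phi :: "nat \<Rightarrow> (complex \<Rightarrow> complex) \<Rightarrow> (nat \<Rightarrow> complex) \<Rightarrow> complex vec" where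
  "Phi k f s = (let R = (SOME R::real. 0 < R \<and> (\<forall>z. Ps k s z = 0 \<longrightarrow> cmod z < R)) in
     vec k (\<lambda>j. contour_integral (circlepath 0 R) (\<lambda>\<zeta>. f \<zeta> * \<zeta>^j / Ps k s \<zeta>) / (2 * of_real pi * \<i>)))"

definition compA :: "nat \<Rightarrow> (nat \<Rightarrow> complex) \<Rightarrow> complex mat" where
  "compA k s = mat k k (\<lambda>(i,j). if i = k - 1 then (-1)^(k-1-j) * s (k - j)
                                 else if j = i + 1 then 1 else 0)"

definition mat_fun :: "(complex \<Rightarrow> complex) \<Rightarrow> complex mat \<Rightarrow> complex mat" where
  "mat_fun g M = mat (dim_row M) (dim_col M)
     (\<lambda>(i,j). \<Sum>n. (deriv ^^ n) g 0 / fact n * (M ^\<^sub>m n) $$ (i,j))"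

text \<open>nabla: entries nabla(i+1,i) = i (1-based), i.e. 0-based nabla(j+1,j) = j+1.\<close>

definition nabla :: "nat \<Rightarrow> complex mat" where
  "nabla k = mat k k (\<lambda>(i,j). if i = j + 1 then of_nat (j + 1) else 0)"

end

theory Submission
  imports Defs
begin

(* Everything is a statement about the moments J_j = (1/2 pi i) \<integral> f(z) z^j / P_s(z) dz over a
   circle enclosing the roots of P_s; by Cauchy's theorem the radius does not matter.
   Modulo P_s, z^k is the combination of 1, ..., z^(k-1) given by the last row of A(s), and
   \<integral> f = 0, so multiplying f by z acts on (J_0, ..., J_(k-1)) as A(s). Expanding an entire g
   in its Taylor series and integrating termwise gives (1).
   For (2), integration by parts on the circle gives
   \<integral> f' z^i / P = \<integral> f z^i P' / P^2 - i \<integral> f z^(i-1) / P.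
   The second term is the i-th entry of nabla Phi_f. For the first, differentiation under the
   integral with dP_s/ds_m = (-1)^m z^(k-m) shows that sum_h (k-h) s_h d/ds_(h+1) multiplies the
   integrand of Phi_f by P_s'. *)

lemma contour_integrable_circlepath_sphere:
  assumes "continuous_on (sphere c R) G" "0 \<le> R"
  shows "G contour_integrable_on circlepath c R"
  using assms by (simp add: contour_integrable_continuous_circlepath path_image_circlepath_nonneg)

lemma contour_integral_circlepath_radius_eq:
  fixes h :: "complex \<Rightarrow> complex"
  assumes "open S" "h holomorphic_on S" "0 < R1" "0 < R2"
    and annulus: "{z. min R1 R2 \<le> cmod z \<and> cmod z \<le> max R1 R2} \<subseteq> S"
  shows "contour_integral (circlepath 0 R1) h = contour_integral (circlepath 0 R2) h"
proof (rule Cauchy_theorem_homotopic_loops[OF _ assms(1,2)])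
  show "homotopic_loops S (circlepath 0 R1) (circlepath 0 R2)"
  proof (rule homotopic_loops_linear)
    fix t :: real
    define e where "e = exp (2 * of_real pi * \<i> * of_real t)"
    have "linear (\<lambda>r. of_real r * e)"
      by (rule linearI) (simp_all add: algebra_simps scaleR_conv_of_real)
    then have "closed_segment (circlepath 0 R1 t) (circlepath 0 R2 t)
        = (\<lambda>r. of_real r * e) ` closed_segment R1 R2"
      unfolding circlepath e_def by (simp add: closed_segment_linear_image[symmetric])
    also have "\<dots> \<subseteq> S"
    proof
      fix z assume "z \<in> (\<lambda>r. of_real r * e) ` closed_segment R1 R2"
      then obtain r where r: "r \<in> closed_segment R1 R2" and z: "z = of_real r * e" by blast
      have "min R1 R2 \<le> r" "r \<le> max R1 R2"
        using r by (auto simp: closed_segment_eq_real_ivl split: if_splits)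
      moreover have "cmod z = r"
        using \<open>min R1 R2 \<le> r\<close> assms(3,4) by (simp add: z e_def norm_mult)
      ultimately show "z \<in> S" using annulus by auto
    qed
    finally show "closed_segment (circlepath 0 R1 t) (circlepath 0 R2 t) \<subseteq> S" .
  qed auto
qed auto

lemma has_field_derivative_contour_integral_circlepath:
  fixes F F' :: "complex \<Rightarrow> complex \<Rightarrow> complex"
  assumes U: "open U" "convex U" "x0 \<in> U"
    and deriv: "\<And>x z. x \<in> U \<Longrightarrow> z \<in> sphere c R \<Longrightarrow> ((\<lambda>x. F x z) has_field_derivative F' x z) (at x)"
    and cont: "\<And>x. x \<in> U \<Longrightarrow> continuous_on (sphere c R) (F x)"
    and cont': "continuous_on (U \<times> sphere c R) (\<lambda>p. F' (fst p) (snd p))"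
    and "0 \<le> R"
  shows "((\<lambda>x. contour_integral (circlepath c R) (F x)) has_field_derivative
           contour_integral (circlepath c R) (F' x0)) (at x0)"
proof -
  define \<gamma>' where "\<gamma>' t = vector_derivative (circlepath c R) (at t)" for t
  have \<gamma>'_cont: "continuous_on A \<gamma>'" for A
    unfolding \<gamma>'_def vector_derivative_circlepath by (intro continuous_intros)
  have \<gamma>_cont: "continuous_on A (circlepath c R)" for A
    unfolding circlepath by (intro continuous_intros)
  have \<gamma>_sphere: "circlepath c R t \<in> sphere c R" for t
    using \<open>0 \<le> R\<close> by (simp add: circlepath dist_norm norm_mult)
  have integral: "contour_integral (circlepath c R) G
      = integral (cbox 0 1) (\<lambda>t. G (circlepath c R t) * \<gamma>' t)" for G
    by (simp add: contour_integral_integral \<gamma>'_def)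
  have "((\<lambda>x. integral (cbox 0 1) (\<lambda>t. F x (circlepath c R t) * \<gamma>' t)) has_field_derivative
          integral (cbox 0 1) (\<lambda>t. F' x0 (circlepath c R t) * \<gamma>' t)) (at x0 within U)"
  proof (rule leibniz_rule_field_derivative[OF _ _ _ U(3,2)])
    fix x t assume "x \<in> U"
    then show "((\<lambda>x. F x (circlepath c R t) * \<gamma>' t) has_field_derivative F' x (circlepath c R t) * \<gamma>' t)
        (at x within U)"
      by (rule DERIV_cmult_right[OF has_field_derivative_at_within[OF deriv[OF _ \<gamma>_sphere]]])
  next
    fix x assume "x \<in> U"
    have "continuous_on (cbox 0 1) (\<lambda>t. F x (circlepath c R t))"
      by (rule continuous_on_compose2[OF cont[OF \<open>x \<in> U\<close>] \<gamma>_cont]) (use \<gamma>_sphere in auto)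
    then show "(\<lambda>t. F x (circlepath c R t) * \<gamma>' t) integrable_on cbox 0 1"
      by (rule integrable_continuous[OF continuous_on_mult[OF _ \<gamma>'_cont]])
  next
    have "continuous_on (U \<times> cbox 0 1) (\<lambda>p. (fst p, circlepath c R (snd p)))"
      unfolding circlepath by (intro continuous_intros)
    then have "continuous_on (U \<times> cbox 0 1)
        ((\<lambda>p. F' (fst p) (snd p)) \<circ> (\<lambda>p. (fst p, circlepath c R (snd p))))"
      by (rule continuous_on_compose[OF _ continuous_on_subset[OF cont']]) (use \<gamma>_sphere in auto)
    moreover have "continuous_on (U \<times> cbox 0 1) (\<lambda>p. \<gamma>' (snd p))"
      unfolding \<gamma>'_def vector_derivative_circlepath by (intro continuous_intros)
    ultimately show "continuous_on (U \<times> cbox 0 1) (\<lambda>(x, t). F' x (circlepath c R t) * \<gamma>' t)"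
      unfolding case_prod_beta o_def by (intro continuous_on_mult) auto
  qed
  then show ?thesis
    using at_within_open[OF U(3,1)] by (simp add: integral)
qed

lemma contour_integral_by_parts_closed_path:
  assumes S: "open S" and u: "u holomorphic_on S" and v: "v holomorphic_on S"
    and \<gamma>: "valid_path \<gamma>" "pathfinish \<gamma> = pathstart \<gamma>" "path_image \<gamma> \<subseteq> S"
  shows "contour_integral \<gamma> (\<lambda>z. deriv u z * v z) = - contour_integral \<gamma> (\<lambda>z. u z * deriv v z)"
proof -
  have "((\<lambda>z. u z * deriv v z + deriv u z * v z) has_contour_integral 0) \<gamma>"
  proof (rule Cauchy_theorem_primitive)
    fix z assume "z \<in> S"
    show "((\<lambda>z. u z * v z) has_field_derivative u z * deriv v z + deriv u z * v z) (at z within S)"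
      by (rule DERIV_mult'[OF has_field_derivative_at_within has_field_derivative_at_within])
         (use holomorphic_derivI[OF u S \<open>z \<in> S\<close>] holomorphic_derivI[OF v S \<open>z \<in> S\<close>] in auto)
  qed (use \<gamma> in auto)
  moreover have "(\<lambda>z. u z * deriv v z) contour_integrable_on \<gamma>"
    and "(\<lambda>z. deriv u z * v z) contour_integrable_on \<gamma>"
    using holomorphic_deriv[OF u S] holomorphic_deriv[OF v S] u v
    by (auto intro: contour_integrable_holomorphic_simple[OF _ S \<gamma>(1,3)] holomorphic_on_mult)
  ultimately have
    "contour_integral \<gamma> (\<lambda>z. u z * deriv v z) + contour_integral \<gamma> (\<lambda>z. deriv u z * v z) = 0"
    by (simp add: contour_integral_add[symmetric] contour_integral_unique)
  then show ?thesis
    by (metis add.commute eq_neg_iff_add_eq_0)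
qed

lemma summable_norm_entire_coeffs:
  assumes "g holomorphic_on UNIV" "0 \<le> C"
  shows "summable (\<lambda>n. cmod ((deriv ^^ n) g 0 / fact n) * C ^ n)"
proof -
  have "(\<lambda>n. (deriv ^^ n) g 0 / fact n * (of_real (C + 1) - 0) ^ n) sums g (of_real (C + 1))"
    using assms
    by (intro holomorphic_power_series[where r = "C + 2"]) (auto intro: holomorphic_on_subset)
  then have "summable (\<lambda>n. norm ((deriv ^^ n) g 0 / fact n * (of_real C :: complex) ^ n))"
    using assms(2) by (intro powser_insidea[of _ "of_real (C + 1)"]) (auto simp: sums_iff)
  then show ?thesis
    using assms(2) by (simp only: norm_mult norm_power norm_of_real abs_of_nonneg)
qed

lemma entire_times_contour_integral_circlepath_sums:
  fixes g H :: "complex \<Rightarrow> complex"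
  assumes g: "g holomorphic_on UNIV" and H: "continuous_on (sphere 0 R) H" and "0 < R"
  shows "(\<lambda>n. (deriv ^^ n) g 0 / fact n * contour_integral (circlepath 0 R) (\<lambda>z. z ^ n * H z))
           sums contour_integral (circlepath 0 R) (\<lambda>z. g z * H z)"
proof -
  define a where "a n = (deriv ^^ n) g 0 / fact n" for n
  have int: "(\<lambda>z. z ^ n * H z) contour_integrable_on circlepath 0 R" for n
    using H \<open>0 < R\<close> by (intro contour_integrable_circlepath_sphere continuous_intros) auto
  obtain M where M: "\<forall>z\<in>sphere 0 R. cmod (H z) \<le> M"
    using compact_imp_bounded[OF compact_continuous_image[OF H compact_sphere]]
    unfolding bounded_iff by blast
  have g_sums: "(\<lambda>n. a n * z ^ n * H z) sums (g z * H z)" for z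
    using holomorphic_power_series[where r = "cmod z + 1" and w = z, of g 0] g
    by (intro sums_mult2) (auto simp: a_def intro: holomorphic_on_subset)
  have "uniform_limit (sphere 0 R) (\<lambda>N z. \<Sum>n<N. a n * (z ^ n * H z))
      (\<lambda>z. \<Sum>n. a n * (z ^ n * H z)) sequentially"
  proof (rule Weierstrass_m_test)
    show "summable (\<lambda>n. cmod (a n) * R ^ n * M)"
      unfolding a_def using \<open>0 < R\<close> by (intro summable_mult2 summable_norm_entire_coeffs g) auto
    fix n and z :: complex assume "z \<in> sphere 0 R"
    then have "cmod (H z) \<le> M" "cmod z = R"
      using M by auto
    then show "cmod (a n * (z ^ n * H z)) \<le> cmod (a n) * R ^ n * M"
      unfolding norm_mult norm_power mult.assoc using \<open>0 < R\<close> by (intro mult_left_mono) auto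
  qed
  moreover have "(\<Sum>n. a n * (z ^ n * H z)) = g z * H z" for z
    using g_sums[of z] by (simp add: sums_iff mult.assoc)
  ultimately have "((\<lambda>N. contour_integral (circlepath 0 R) (\<lambda>z. \<Sum>n<N. a n * (z ^ n * H z)))
      \<longlongrightarrow> contour_integral (circlepath 0 R) (\<lambda>z. g z * H z)) sequentially"
    using \<open>0 < R\<close> int
    by (intro contour_integral_uniform_limit_circlepath(2))
       (auto intro!: always_eventually contour_integrable_sum contour_integrable_lmul)
  moreover have "contour_integral (circlepath 0 R) (\<lambda>z. \<Sum>n<N. a n * (z ^ n * H z))
      = (\<Sum>n<N. a n * contour_integral (circlepath 0 R) (\<lambda>z. z ^ n * H z))" for N
    using int by (simp add: contour_integral_sum contour_integrable_lmul contour_integral_lmul)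
  ultimately show ?thesis
    unfolding sums_def a_def by simp
qed

lemma norm_mat_pow_entry_le:
  fixes A :: "complex mat"
  assumes A: "A \<in> carrier_mat k k" and "i < k" "j < k"
  shows "cmod ((A ^\<^sub>m n) $$ (i, j)) \<le> (1 + (\<Sum>i<k. \<Sum>j<k. cmod (A $$ (i, j)))) ^ n"
proof -
  define C where "C = 1 + (\<Sum>i<k. \<Sum>j<k. cmod (A $$ (i, j)))"
  have C: "1 \<le> C"
    unfolding C_def by (simp add: sum_nonneg)
  have "cmod ((A ^\<^sub>m n) $$ (i, j)) \<le> C ^ n"
    using \<open>i < k\<close> \<open>j < k\<close>
  proof (induction n arbitrary: i j)
    case 0
    then show ?case using A C by auto
  next
    case (Suc n)
    have col: "(\<Sum>l<k. cmod (A $$ (l, j))) \<le> C"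
    proof -
      have "(\<Sum>l<k. cmod (A $$ (l, j))) \<le> (\<Sum>l<k. \<Sum>j'<k. cmod (A $$ (l, j')))"
        using Suc.prems by (intro sum_mono member_le_sum) auto
      then show ?thesis unfolding C_def by linarith
    qed
    have "cmod ((A ^\<^sub>m Suc n) $$ (i, j)) = cmod (\<Sum>l<k. (A ^\<^sub>m n) $$ (i, l) * A $$ (l, j))"
      using Suc.prems A by (simp add: scalar_prod_def atLeast0LessThan)
    also have "\<dots> \<le> (\<Sum>l<k. cmod ((A ^\<^sub>m n) $$ (i, l)) * cmod (A $$ (l, j)))"
      by (rule order_trans[OF norm_sum]) (simp add: norm_mult)
    also have "\<dots> \<le> (\<Sum>l<k. C ^ n * cmod (A $$ (l, j)))"
      using Suc by (intro sum_mono mult_right_mono) auto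
    also have "\<dots> = C ^ n * (\<Sum>l<k. cmod (A $$ (l, j)))"
      by (simp add: sum_distrib_left)
    also have "\<dots> \<le> C ^ n * C"
      using col C by (intro mult_left_mono) auto
    finally show ?case
      by (simp add: mult.commute)
  qed
  then show ?thesis
    unfolding C_def .
qed

lemma mat_fun_mult_vec_sums:
  assumes g: "g holomorphic_on UNIV" and A: "A \<in> carrier_mat k k"
    and v: "v \<in> carrier_vec k" and "i < k"
  shows "(\<lambda>n. (deriv ^^ n) g 0 / fact n * ((A ^\<^sub>m n) *\<^sub>v v) $ i) sums (mat_fun g A *\<^sub>v v) $ i"
proof -
  define a where "a n = (deriv ^^ n) g 0 / fact n" for n
  define C where "C = 1 + (\<Sum>i<k. \<Sum>j<k. cmod (A $$ (i, j)))"
  have summable_entry: "summable (\<lambda>n. a n * (A ^\<^sub>m n) $$ (i, l))" if "l < k" for l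
  proof (rule summable_comparison_test'[where g = "\<lambda>n. cmod (a n) * C ^ n"])
    show "summable (\<lambda>n. cmod (a n) * C ^ n)"
      unfolding a_def C_def by (intro summable_norm_entire_coeffs g) (simp add: sum_nonneg)
    show "cmod (a n * (A ^\<^sub>m n) $$ (i, l)) \<le> cmod (a n) * C ^ n" for n
      using norm_mat_pow_entry_le[OF A \<open>i < k\<close> \<open>l < k\<close>, of n]
      unfolding norm_mult C_def by (intro mult_left_mono) auto
  qed
  have entry_sums: "(\<lambda>n. a n * (A ^\<^sub>m n) $$ (i, l) * v $ l)
      sums ((\<Sum>n. a n * (A ^\<^sub>m n) $$ (i, l)) * v $ l)"
    if "l < k" for l
    using summable_entry[OF that] by (intro sums_mult2 summable_sums)
  have "(\<lambda>n. \<Sum>l\<in>{0..<k}. a n * (A ^\<^sub>m n) $$ (i, l) * v $ l)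
      sums (\<Sum>l\<in>{0..<k}. (\<Sum>n. a n * (A ^\<^sub>m n) $$ (i, l)) * v $ l)"
    using entry_sums by (intro sums_sum) auto
  then show ?thesis
    using A v \<open>i < k\<close>
    by (simp add: a_def mat_fun_def scalar_prod_def sum_distrib_left mult.assoc)
qed

definition root_bound :: "nat \<Rightarrow> (nat \<Rightarrow> complex) \<Rightarrow> real" where
  "root_bound k s = 1 + (\<Sum>h=1..k. cmod (s h))"

definition encloses_roots :: "nat \<Rightarrow> (nat \<Rightarrow> complex) \<Rightarrow> real \<Rightarrow> bool" where
  "encloses_roots k s R \<longleftrightarrow> 0 < R \<and> (\<forall>z. Ps k s z = 0 \<longrightarrow> cmod z < R)"

lemma Ps_eq: "Ps k s z = z ^ k + (\<Sum>h=1..k. (-1) ^ h * s h * z ^ (k - h))"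
proof -
  have "{0..k} = insert 0 {1..k}" by auto
  then show ?thesis unfolding Ps_def by (simp add: sc_def)
qed

lemma Ps_holomorphic [holomorphic_intros]: "(\<lambda>z. Ps k s z) holomorphic_on A"
  unfolding Ps_def by (intro holomorphic_intros)

lemma Ps_continuous_on [continuous_intros]: "continuous_on A g \<Longrightarrow> continuous_on A (\<lambda>x. Ps k s (g x))"
  unfolding Ps_def by (intro continuous_intros)

lemma root_bound_ge_1: "1 \<le> root_bound k s"
  unfolding root_bound_def by (simp add: sum_nonneg)

lemma Ps_nonzero:
  assumes "root_bound k s \<le> cmod z"
  shows "Ps k s z \<noteq> 0"
proof (cases "k = 0")
  case True
  then show ?thesis by (simp add: Ps_def sc_def)
next
  case False
  have z: "1 \<le> cmod z"
    using assms root_bound_ge_1[of k s] by linarith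
  have "cmod (\<Sum>h=1..k. (-1) ^ h * s h * z ^ (k - h)) \<le> (\<Sum>h=1..k. cmod (s h) * cmod z ^ (k - 1))"
  proof (rule order_trans[OF norm_sum sum_mono])
    fix h assume "h \<in> {1..k}"
    then have "cmod z ^ (k - h) \<le> cmod z ^ (k - 1)"
      using z by (intro power_increasing) auto
    then show "cmod ((-1) ^ h * s h * z ^ (k - h)) \<le> cmod (s h) * cmod z ^ (k - 1)"
      by (simp add: norm_mult norm_power mult_left_mono)
  qed
  also have "\<dots> = (root_bound k s - 1) * cmod z ^ (k - 1)"
    unfolding root_bound_def by (simp add: sum_distrib_right)
  also have "\<dots> < cmod z * cmod z ^ (k - 1)"
    using z assms by (intro mult_strict_right_mono zero_less_power) auto
  also have "\<dots> = cmod (z ^ k)"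
    using False by (cases k) (simp_all add: norm_power norm_mult)
  finally show ?thesis
    unfolding Ps_eq by (metis add_eq_0_iff norm_minus_cancel less_irrefl)
qed

lemma encloses_roots_if_root_bound_le:
  assumes "root_bound k s \<le> R"
  shows "encloses_roots k s R"
  unfolding encloses_roots_def
proof (intro conjI allI impI)
  show "0 < R"
    using root_bound_ge_1[of k s] assms by linarith
  fix z assume "Ps k s z = 0"
  then show "cmod z < R"
    using Ps_nonzero[of k s z] assms by (meson not_le order.trans)
qed

lemma encloses_roots_Ps_nonzero: "encloses_roots k s R \<Longrightarrow> R \<le> cmod z \<Longrightarrow> Ps k s z \<noteq> 0"
  unfolding encloses_roots_def by force

lemma contour_integrable_div_Ps:
  assumes "continuous_on UNIV F" and R: "encloses_roots k s R"
  shows "(\<lambda>z. F z / Ps k s z) contour_integrable_on circlepath 0 R"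
    and "(\<lambda>z. F z / Ps k s z ^ 2) contour_integrable_on circlepath 0 R"
proof -
  have F: "continuous_on (sphere 0 R) F"
    using continuous_on_subset[OF assms(1)] by blast
  have P: "continuous_on (sphere 0 R) (\<lambda>z. Ps k s z)"
    by (intro continuous_intros)
  have "0 \<le> R" and nz: "\<forall>z\<in>sphere 0 R. Ps k s z \<noteq> 0"
    using R encloses_roots_Ps_nonzero[OF R] by (auto simp: encloses_roots_def)
  then show "(\<lambda>z. F z / Ps k s z) contour_integrable_on circlepath 0 R"
    by (intro contour_integrable_circlepath_sphere continuous_on_divide[OF F P nz])
  show "(\<lambda>z. F z / Ps k s z ^ 2) contour_integrable_on circlepath 0 R"
    using \<open>0 \<le> R\<close> nz
    by (intro contour_integrable_circlepath_sphere continuous_on_divide[OF F continuous_on_power[OF P]])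
       auto
qed

lemma Phi_dim [simp]: "dim_vec (Phi k f s) = k"
  unfolding Phi_def Let_def by (simp only: dim_vec)

lemma Phi_carrier: "Phi k f s \<in> carrier_vec k"
  by (rule carrier_vecI[OF Phi_dim])

lemma Phi_nth:
  assumes f: "f holomorphic_on UNIV" and R: "encloses_roots k s R" and "j < k"
  shows "Phi k f s $ j
       = contour_integral (circlepath 0 R) (\<lambda>z. f z * z ^ j / Ps k s z) / (2 * of_real pi * \<i>)"
proof -
  define R0 where "R0 = (SOME R::real. 0 < R \<and> (\<forall>z. Ps k s z = 0 \<longrightarrow> cmod z < R))"
  have R0: "encloses_roots k s R0"
    unfolding R0_def encloses_roots_def
    by (rule someI_ex)
       (use encloses_roots_if_root_bound_le[OF order_refl] in \<open>auto simp: encloses_roots_def\<close>)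
  have "contour_integral (circlepath 0 R0) (\<lambda>z. f z * z ^ j / Ps k s z)
      = contour_integral (circlepath 0 R) (\<lambda>z. f z * z ^ j / Ps k s z)"
  proof (rule contour_integral_circlepath_radius_eq[where S = "{z. Ps k s z \<noteq> 0}"])
    show "open {z. Ps k s z \<noteq> 0}"
      by (intro open_Collect_neq continuous_intros)
    show "(\<lambda>z. f z * z ^ j / Ps k s z) holomorphic_on {z. Ps k s z \<noteq> 0}"
      using f by (intro holomorphic_intros) (auto intro: holomorphic_on_subset)
    show "{z. min R0 R \<le> cmod z \<and> cmod z \<le> max R0 R} \<subseteq> {z. Ps k s z \<noteq> 0}"
      using encloses_roots_Ps_nonzero[OF R0] encloses_roots_Ps_nonzero[OF R]
      by (auto simp: min_le_iff_disj)
  qed (use R R0 in \<open>auto simp: encloses_roots_def\<close>)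
  then show ?thesis
    unfolding Phi_def Let_def R0_def[symmetric] index_vec[OF \<open>j < k\<close>] by (simp only:)
qed

lemma dim_compA [simp]: "dim_row (compA k s) = k" "dim_col (compA k s) = k"
  unfolding compA_def by simp_all

lemma compA_carrier: "compA k s \<in> carrier_mat k k"
  unfolding compA_def by simp

lemma power_eq_Ps_plus_lower_powers:
  "z ^ k = Ps k s z + (\<Sum>l<k. (-1) ^ (k - 1 - l) * s (k - l) * z ^ l)"
proof -
  have "(\<Sum>h=1..k. (-1) ^ h * s h * z ^ (k - h)) = (\<Sum>l<k. (-1) ^ (k - l) * s (k - l) * z ^ l)"
    by (rule sum.reindex_bij_witness[of _ "\<lambda>l. k - l" "\<lambda>h. k - h"]) auto
  also have "\<dots> = - (\<Sum>l<k. (-1) ^ (k - 1 - l) * s (k - l) * z ^ l)"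
    unfolding sum_negf[symmetric]
  proof (rule sum.cong)
    fix l assume "l \<in> {..<k}"
    then have "k - l = Suc (k - 1 - l)" by auto
    then show "(-1) ^ (k - l) * s (k - l) * z ^ l = - ((-1) ^ (k - 1 - l) * s (k - l) * z ^ l)"
      by simp
  qed simp
  finally show ?thesis
    unfolding Ps_eq by simp
qed

lemma moment_recurrence:
  assumes f: "f holomorphic_on UNIV" and R: "encloses_roots k s R"
  shows "contour_integral (circlepath 0 R) (\<lambda>z. f z * z ^ k / Ps k s z)
       = (\<Sum>l<k. (-1) ^ (k - 1 - l) * s (k - l) *
            contour_integral (circlepath 0 R) (\<lambda>z. f z * z ^ l / Ps k s z))"
proof -
  define c where "c l = (-1) ^ (k - 1 - l) * s (k - l)" for l
  have "0 < R"
    using R by (simp add: encloses_roots_def)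
  have f_cont: "continuous_on UNIV f"
    using f holomorphic_on_imp_continuous_on by blast
  have int: "(\<lambda>z. f z * z ^ l / Ps k s z) contour_integrable_on circlepath 0 R" for l
    by (intro contour_integrable_div_Ps(1)[OF _ R] continuous_intros f_cont)
  have int_c: "(\<lambda>z. c l * (f z * z ^ l / Ps k s z)) contour_integrable_on circlepath 0 R" for l
    by (rule contour_integrable_lmul[OF int])
  have "contour_integral (circlepath 0 R) (\<lambda>z. f z * z ^ k / Ps k s z)
      = contour_integral (circlepath 0 R) (\<lambda>z. f z + (\<Sum>l<k. c l * (f z * z ^ l / Ps k s z)))"
  proof (rule contour_integral_eq)
    fix z assume "z \<in> path_image (circlepath 0 R)"
    then have "Ps k s z \<noteq> 0"
      using encloses_roots_Ps_nonzero[OF R] \<open>0 < R\<close> by (simp add: path_image_circlepath_nonneg)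
    then show "f z * z ^ k / Ps k s z = f z + (\<Sum>l<k. c l * (f z * z ^ l / Ps k s z))"
      unfolding power_eq_Ps_plus_lower_powers[of z k s] c_def
      by (simp add: field_simps sum_distrib_left sum_divide_distrib)
  qed
  also have "\<dots> = contour_integral (circlepath 0 R) f
                 + contour_integral (circlepath 0 R) (\<lambda>z. \<Sum>l<k. c l * (f z * z ^ l / Ps k s z))"
    using f_cont \<open>0 < R\<close>
    by (intro contour_integral_add contour_integrable_sum finite_lessThan int_c
        contour_integrable_circlepath_sphere continuous_on_subset[OF f_cont]) auto
  also have "contour_integral (circlepath 0 R) (\<lambda>z. \<Sum>l<k. c l * (f z * z ^ l / Ps k s z))
      = (\<Sum>l<k. c l * contour_integral (circlepath 0 R) (\<lambda>z. f z * z ^ l / Ps k s z))"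
    by (simp only: contour_integral_sum[OF finite_lessThan int_c] contour_integral_lmul[OF int])
  also have "contour_integral (circlepath 0 R) f = 0"
    using Cauchy_theorem_convex_simple[OF f convex_UNIV, of "circlepath 0 R"]
    by (auto intro: contour_integral_unique)
  finally show ?thesis
    unfolding c_def by simp
qed

lemma Phi_z_mult:
  assumes f: "f holomorphic_on UNIV"
  shows "Phi k (\<lambda>z. z * f z) s = compA k s *\<^sub>v Phi k f s"
proof (rule eq_vecI)
  define R where "R = root_bound k s"
  have R: "encloses_roots k s R"
    unfolding R_def by (rule encloses_roots_if_root_bound_le[OF order_refl])
  define J where "J n = contour_integral (circlepath 0 R) (\<lambda>z. f z * z ^ n / Ps k s z)" for n
  define c where "c = 2 * of_real pi * \<i>"
  have zf: "(\<lambda>z. z * f z) holomorphic_on UNIV"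
    using f by (intro holomorphic_intros)
  fix i assume "i < dim_vec (compA k s *\<^sub>v Phi k f s)"
  then have "i < k"
    by simp
  have "Phi k (\<lambda>z. z * f z) s $ i = J (Suc i) / c"
    unfolding Phi_nth[OF zf R \<open>i < k\<close>] J_def c_def by (simp add: mult_ac)
  moreover have "(compA k s *\<^sub>v Phi k f s) $ i = (\<Sum>l<k. compA k s $$ (i, l) * (J l / c))"
    using \<open>i < k\<close> by (simp add: compA_def scalar_prod_def Phi_nth[OF f R] J_def c_def atLeast0LessThan)
  moreover have "(\<Sum>l<k. compA k s $$ (i, l) * (J l / c)) = J (Suc i) / c"
  proof (cases "i = k - 1")
    case True
    have "(\<Sum>l<k. compA k s $$ (i, l) * (J l / c)) = (\<Sum>l<k. (-1) ^ (k - 1 - l) * s (k - l) * J l) / c"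
      using True \<open>i < k\<close> by (simp add: compA_def sum_divide_distrib)
    also have "\<dots> = J k / c"
      unfolding J_def by (simp add: moment_recurrence[OF f R])
    finally show ?thesis
      using True \<open>i < k\<close> by simp
  next
    case False
    then have "(\<Sum>l<k. compA k s $$ (i, l) * (J l / c)) = (\<Sum>l<k. if l = Suc i then J l / c else 0)"
      using \<open>i < k\<close> by (intro sum.cong) (auto simp: compA_def)
    then show ?thesis
      using False \<open>i < k\<close> by simp
  qed
  ultimately show "Phi k (\<lambda>z. z * f z) s $ i = (compA k s *\<^sub>v Phi k f s) $ i"
    by simp
qed simp

lemma Phi_power_mult:
  assumes "f holomorphic_on UNIV"
  shows "Phi k (\<lambda>z. z ^ n * f z) s = (compA k s ^\<^sub>m n) *\<^sub>v Phi k f s"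
  using assms
proof (induction n arbitrary: f)
  case 0
  have "compA k s ^\<^sub>m 0 = 1\<^sub>m k"
    by simp
  then show ?case
    using Phi_carrier by simp
next
  case (Suc n)
  have "(\<lambda>z. z * f z) holomorphic_on UNIV"
    using Suc.prems by (intro holomorphic_intros)
  then have "Phi k (\<lambda>z. z ^ n * (z * f z)) s = (compA k s ^\<^sub>m n) *\<^sub>v (compA k s *\<^sub>v Phi k f s)"
    using Suc.IH Phi_z_mult[OF Suc.prems] by simp
  also have "\<dots> = (compA k s ^\<^sub>m n * compA k s) *\<^sub>v Phi k f s"
    by (subst assoc_mult_mat_vec) (auto intro: pow_carrier_mat compA_carrier Phi_carrier)
  finally show ?case
    by (simp add: mult_ac)
qed

lemma Phi_entire_mult_nth_sums:
  assumes f: "f holomorphic_on UNIV" and g: "g holomorphic_on UNIV" and "i < k"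
  shows "(\<lambda>n. (deriv ^^ n) g 0 / fact n * Phi k (\<lambda>z. z ^ n * f z) s $ i)
           sums Phi k (\<lambda>z. g z * f z) s $ i"
proof -
  define R where "R = root_bound k s"
  have R: "encloses_roots k s R"
    unfolding R_def by (rule encloses_roots_if_root_bound_le[OF order_refl])
  define H where "H z = f z * z ^ i / Ps k s z" for z
  have "0 < R" "\<forall>z\<in>sphere 0 R. Ps k s z \<noteq> 0"
    using R encloses_roots_Ps_nonzero[OF R] by (auto simp: encloses_roots_def)
  moreover have "continuous_on (sphere 0 R) f"
    using holomorphic_on_imp_continuous_on[OF f] continuous_on_subset by blast
  ultimately have "continuous_on (sphere 0 R) H"
    unfolding H_def by (intro continuous_intros) auto
  from sums_divide[OF entire_times_contour_integral_circlepath_sums[OF g this \<open>0 < R\<close>]]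
  have "(\<lambda>n. (deriv ^^ n) g 0 / fact n *
            (contour_integral (circlepath 0 R) (\<lambda>z. z ^ n * H z) / (2 * of_real pi * \<i>)))
          sums (contour_integral (circlepath 0 R) (\<lambda>z. g z * H z) / (2 * of_real pi * \<i>))"
    by simp
  moreover have "Phi k (\<lambda>z. h z * f z) s $ i
      = contour_integral (circlepath 0 R) (\<lambda>z. h z * H z) / (2 * of_real pi * \<i>)"
    if "h holomorphic_on UNIV" for h
  proof -
    have "(\<lambda>z. h z * f z) holomorphic_on UNIV"
      using that f by (intro holomorphic_intros)
    from Phi_nth[OF this R \<open>i < k\<close>] show ?thesis
      by (simp add: H_def mult_ac)
  qed
  moreover have "(\<lambda>z. z ^ n) holomorphic_on UNIV" for n :: nat
    by (intro holomorphic_intros)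
  ultimately show ?thesis
    using g by simp
qed

lemma Phi_entire_mult:
  assumes f: "f holomorphic_on UNIV" and g: "g holomorphic_on UNIV"
  shows "Phi k (\<lambda>z. g z * f z) s = mat_fun g (compA k s) *\<^sub>v Phi k f s"
proof (rule eq_vecI)
  fix i assume "i < dim_vec (mat_fun g (compA k s) *\<^sub>v Phi k f s)"
  then have "i < k"
    by (simp add: mat_fun_def)
  show "Phi k (\<lambda>z. g z * f z) s $ i = (mat_fun g (compA k s) *\<^sub>v Phi k f s) $ i"
    using Phi_entire_mult_nth_sums[OF f g \<open>i < k\<close>, of s]
      mat_fun_mult_vec_sums[OF g compA_carrier Phi_carrier \<open>i < k\<close>]
    unfolding Phi_power_mult[OF f] by (rule sums_unique2)
qed (simp add: mat_fun_def)

lemma Ps_fun_upd: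
  assumes "m \<in> {1..k}"
  shows "Ps k (s(m := t)) z = Ps k s z + (-1) ^ m * (t - s m) * z ^ (k - m)"
proof -
  have "Ps k (s(m := t)) z
      = (\<Sum>h=0..k. (-1) ^ h * sc s h * z ^ (k - h) + (if h = m then (-1) ^ m * (t - s m) * z ^ (k - m) else 0))"
    unfolding Ps_def using assms by (intro sum.cong) (auto simp: sc_def algebra_simps)
  then show ?thesis
    using assms by (simp add: sum.distrib Ps_def)
qed

lemma root_bound_fun_upd:
  assumes "m \<in> {1..k}"
  shows "root_bound k (s(m := t)) \<le> root_bound k s + cmod (t - s m)"
proof -
  have "(\<Sum>h=1..k. cmod ((s(m := t)) h)) \<le> (\<Sum>h=1..k. cmod (s h) + (if h = m then cmod (t - s m) else 0))"
    by (intro sum_mono) (auto simp: norm_triangle_sub add.commute)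
  also have "\<dots> = (\<Sum>h=1..k. cmod (s h)) + cmod (t - s m)"
    using assms by (simp add: sum.distrib)
  finally show ?thesis
    unfolding root_bound_def by simp
qed

lemma encloses_roots_fun_upd:
  assumes "m \<in> {1..k}" "t \<in> ball (s m) 1"
  shows "encloses_roots k (s(m := t)) (root_bound k s + 1)"
  using root_bound_fun_upd[OF assms(1), of s t] assms(2)
  by (intro encloses_roots_if_root_bound_le) (auto simp: dist_norm norm_minus_commute)

lemma Phi_nth_has_field_derivative_coord:
  assumes f: "f holomorphic_on UNIV" and m: "m \<in> {1..k}" and "i < k"
  shows "((\<lambda>t. Phi k f (s(m := t)) $ i) has_field_derivative
           contour_integral (circlepath 0 (root_bound k s + 1))
             (\<lambda>z. - ((-1) ^ m * f z * z ^ i * z ^ (k - m)) / Ps k s z ^ 2)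
           / (2 * of_real pi * \<i>)) (at (s m))"
proof -
  define R where "R = root_bound k s + 1"
  define Q where "Q t z = Ps k s z + (-1) ^ m * (t - s m) * z ^ (k - m)" for t z
  have PQ: "Ps k (s(m := t)) z = Q t z" for t z
    unfolding Q_def by (rule Ps_fun_upd[OF m])
  have enc: "encloses_roots k (s(m := t)) R" if "t \<in> ball (s m) 1" for t
    unfolding R_def using m that by (rule encloses_roots_fun_upd)
  have Q_nz: "Q t z \<noteq> 0" if "t \<in> ball (s m) 1" "z \<in> sphere 0 R" for t z
    using encloses_roots_Ps_nonzero[OF enc[OF that(1)], of z] that(2) by (simp add: PQ)
  have f_cont: "continuous_on A f" for A
    using holomorphic_on_imp_continuous_on[OF f] continuous_on_subset by blast
  have "((\<lambda>t. contour_integral (circlepath 0 R) (\<lambda>z. f z * z ^ i / Q t z)) has_field_derivative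
          contour_integral (circlepath 0 R) (\<lambda>z. - ((-1) ^ m * f z * z ^ i * z ^ (k - m)) / Q (s m) z ^ 2))
          (at (s m))"
  proof (rule has_field_derivative_contour_integral_circlepath[where U = "ball (s m) 1"])
    fix t and z :: complex assume t: "t \<in> ball (s m) 1" and z: "z \<in> sphere 0 R"
    have "((\<lambda>t. Q t z) has_field_derivative (-1) ^ m * z ^ (k - m)) (at t)"
      unfolding Q_def by (auto intro!: derivative_eq_intros)
    from DERIV_divide[OF DERIV_const this Q_nz[OF t z]]
    show "((\<lambda>t. f z * z ^ i / Q t z) has_field_derivative
            - ((-1) ^ m * f z * z ^ i * z ^ (k - m)) / Q t z ^ 2) (at t)"
      by (rule DERIV_cong) (simp add: power2_eq_square)
  next
    fix t assume "t \<in> ball (s m) 1"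
    then show "continuous_on (sphere 0 R) (\<lambda>z. f z * z ^ i / Q t z)"
      using Q_nz unfolding Q_def by (intro continuous_intros f_cont) auto
  next
    have "continuous_on (ball (s m) 1 \<times> sphere 0 R) (\<lambda>p. f (snd p))"
      by (rule continuous_on_compose2[OF f_cont continuous_on_snd]) auto
    then show "continuous_on (ball (s m) 1 \<times> sphere 0 R)
        (\<lambda>p. - ((-1) ^ m * f (snd p) * snd p ^ i * snd p ^ (k - m)) / Q (fst p) (snd p) ^ 2)"
      using Q_nz unfolding Q_def by (intro continuous_intros) auto
  qed (use root_bound_ge_1[of k s] in \<open>auto simp: R_def\<close>)
  then have "((\<lambda>t. Phi k f (s(m := t)) $ i) has_field_derivative
      contour_integral (circlepath 0 R) (\<lambda>z. - ((-1) ^ m * f z * z ^ i * z ^ (k - m)) / Q (s m) z ^ 2)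
        / (2 * of_real pi * \<i>)) (at (s m))"
  proof (rule has_field_derivative_transform_within_open[OF DERIV_cdivide open_ball])
    fix t assume "t \<in> ball (s m) 1"
    from Phi_nth[OF f enc[OF this] \<open>i < k\<close>]
    show "contour_integral (circlepath 0 R) (\<lambda>z. f z * z ^ i / Q t z) / (2 * of_real pi * \<i>)
        = Phi k f (s(m := t)) $ i"
      by (simp add: PQ)
  qed simp
  then show ?thesis
    by (simp add: Q_def R_def)
qed

definition Ps_deriv :: "nat \<Rightarrow> (nat \<Rightarrow> complex) \<Rightarrow> complex \<Rightarrow> complex" where
  "Ps_deriv k s z = (\<Sum>h<k. (-1) ^ h * sc s h * of_nat (k - h) * z ^ (k - h - 1))"

lemma Ps_deriv_continuous_on [continuous_intros]:
  "continuous_on A g \<Longrightarrow> continuous_on A (\<lambda>x. Ps_deriv k s (g x))"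
  unfolding Ps_deriv_def by (intro continuous_intros)

lemma Ps_has_field_derivative: "((\<lambda>z. Ps k s z) has_field_derivative Ps_deriv k s z) (at z)"
proof -
  have "((\<lambda>z. \<Sum>h=0..k. (-1) ^ h * sc s h * z ^ (k - h)) has_field_derivative
           (\<Sum>h=0..k. (-1) ^ h * sc s h * (of_nat (k - h) * (1 * z ^ (k - h - Suc 0))))) (at z)"
    by (intro DERIV_sum DERIV_cmult DERIV_power DERIV_ident)
  moreover have "{0..k} = insert k {..<k}"
    by auto
  ultimately show ?thesis
    unfolding Ps_def Ps_deriv_def by (simp add: mult_ac)
qed

lemma contour_integral_deriv_div_Ps:
  assumes f: "f holomorphic_on UNIV" and R: "encloses_roots k s R"
  shows "contour_integral (circlepath 0 R) (\<lambda>z. deriv f z * z ^ i / Ps k s z)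
       = contour_integral (circlepath 0 R) (\<lambda>z. f z * z ^ i * Ps_deriv k s z / Ps k s z ^ 2)
         - of_nat i * contour_integral (circlepath 0 R) (\<lambda>z. f z * z ^ (i - 1) / Ps k s z)"
proof -
  define S where "S = {z. Ps k s z \<noteq> 0}"
  define v where "v z = z ^ i / Ps k s z" for z
  have S: "open S"
    unfolding S_def by (intro open_Collect_neq continuous_intros)
  have v: "v holomorphic_on S"
    unfolding v_def S_def by (intro holomorphic_intros) auto
  have "0 < R"
    using R by (simp add: encloses_roots_def)
  then have \<gamma>: "path_image (circlepath 0 R) \<subseteq> S"
    using encloses_roots_Ps_nonzero[OF R] by (auto simp: S_def path_image_circlepath_nonneg)
  have f_cont: "continuous_on UNIV f"
    using holomorphic_on_imp_continuous_on[OF f] .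
  have int1: "(\<lambda>z. f z * z ^ (i - 1) / Ps k s z) contour_integrable_on circlepath 0 R"
    by (intro contour_integrable_div_Ps(1)[OF _ R] continuous_intros f_cont)
  have int2: "(\<lambda>z. f z * z ^ i * Ps_deriv k s z / Ps k s z ^ 2) contour_integrable_on circlepath 0 R"
    by (intro contour_integrable_div_Ps(2)[OF _ R] continuous_intros f_cont)
  have "contour_integral (circlepath 0 R) (\<lambda>z. f z * deriv v z)
      = contour_integral (circlepath 0 R)
          (\<lambda>z. of_nat i * (f z * z ^ (i - 1) / Ps k s z) - f z * z ^ i * Ps_deriv k s z / Ps k s z ^ 2)"
  proof (rule contour_integral_eq)
    fix z assume "z \<in> path_image (circlepath 0 R)"
    then have nz: "Ps k s z \<noteq> 0"
      using \<gamma> by (auto simp: S_def)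
    have dv: "deriv v z
        = (of_nat i * (1 * z ^ (i - Suc 0)) * Ps k s z - z ^ i * Ps_deriv k s z) / (Ps k s z * Ps k s z)"
      unfolding v_def
      by (rule DERIV_imp_deriv[OF DERIV_divide[OF DERIV_power[OF DERIV_ident] Ps_has_field_derivative nz]])
    show "f z * deriv v z
        = of_nat i * (f z * z ^ (i - 1) / Ps k s z) - f z * z ^ i * Ps_deriv k s z / Ps k s z ^ 2"
      unfolding dv
      using nz by (simp add: field_simps power2_eq_square)
  qed
  also have "\<dots> = of_nat i * contour_integral (circlepath 0 R) (\<lambda>z. f z * z ^ (i - 1) / Ps k s z)
      - contour_integral (circlepath 0 R) (\<lambda>z. f z * z ^ i * Ps_deriv k s z / Ps k s z ^ 2)"
    by (simp only: contour_integral_diff[OF contour_integrable_lmul[OF int1] int2]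
        contour_integral_lmul[OF int1])
  finally show ?thesis
    using contour_integral_by_parts_closed_path[OF S holomorphic_on_subset[OF f] v _ _ \<gamma>]
    by (simp add: v_def)
qed

lemma nabla_mult_vec_nth:
  assumes "i < k" "v \<in> carrier_vec k"
  shows "(nabla k *\<^sub>v v) $ i = of_nat i * v $ (i - 1)"
proof -
  have "(nabla k *\<^sub>v v) $ i = (\<Sum>j<k. (if i = j + 1 then of_nat (j + 1) else 0) * v $ j)"
    using assms by (simp add: nabla_def scalar_prod_def atLeast0LessThan)
  also have "\<dots> = (\<Sum>j<k. if j = i - 1 then (if i = 0 then 0 else of_nat i * v $ j) else 0)"
    by (intro sum.cong) auto
  also have "\<dots> = of_nat i * v $ (i - 1)"
    using assms by (cases "i = 0") auto
  finally show ?thesis .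
qed

lemma sum_coordinate_derivatives_Phi_nth:
  assumes f: "f holomorphic_on UNIV" and "i < k"
  shows "(\<Sum>h<k. of_nat (k - h) * sc s h * deriv (\<lambda>t. Phi k f (s(h + 1 := t)) $ i) (s (h + 1)))
       = contour_integral (circlepath 0 (root_bound k s + 1))
           (\<lambda>z. f z * z ^ i * Ps_deriv k s z / Ps k s z ^ 2) / (2 * of_real pi * \<i>)"
proof -
  define R where "R = root_bound k s + 1"
  define c where "c = 2 * of_real pi * \<i>"
  define T where "T h z = - ((-1) ^ (h + 1) * f z * z ^ i * z ^ (k - (h + 1))) / Ps k s z ^ 2" for h z
  have R: "encloses_roots k s R"
    unfolding R_def by (rule encloses_roots_if_root_bound_le) simp
  have int: "T h contour_integrable_on circlepath 0 R" for h
    unfolding T_def using holomorphic_on_imp_continuous_on[OF f]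
    by (intro contour_integrable_div_Ps(2)[OF _ R] continuous_intros)
  have D: "deriv (\<lambda>t. Phi k f (s(h + 1 := t)) $ i) (s (h + 1))
      = contour_integral (circlepath 0 R) (T h) / c"
    if "h < k" for h
    using that unfolding T_def R_def c_def
    by (intro DERIV_imp_deriv Phi_nth_has_field_derivative_coord[OF f _ \<open>i < k\<close>]) auto
  have "(\<Sum>h<k. of_nat (k - h) * sc s h * deriv (\<lambda>t. Phi k f (s(h + 1 := t)) $ i) (s (h + 1)))
      = (\<Sum>h<k. of_nat (k - h) * sc s h * (contour_integral (circlepath 0 R) (T h) / c))"
    by (intro sum.cong refl) (simp only: D lessThan_iff)
  also have "\<dots> = (\<Sum>h<k. contour_integral (circlepath 0 R) (\<lambda>z. of_nat (k - h) * sc s h * T h z)) / c"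
    by (simp only: sum_divide_distrib contour_integral_lmul[OF int] times_divide_eq_right)
  also have "\<dots> = contour_integral (circlepath 0 R) (\<lambda>z. \<Sum>h<k. of_nat (k - h) * sc s h * T h z) / c"
    by (simp only: contour_integral_sum[OF finite_lessThan contour_integrable_lmul[OF int]])
  also have "(\<lambda>z. \<Sum>h<k. of_nat (k - h) * sc s h * T h z)
      = (\<lambda>z. f z * z ^ i * Ps_deriv k s z / Ps k s z ^ 2)"
    unfolding T_def Ps_deriv_def by (simp add: sum_distrib_left sum_divide_distrib mult_ac)
  finally show ?thesis
    unfolding R_def c_def .
qed

lemma Phi_deriv:
  assumes f: "f holomorphic_on UNIV"
  shows "Phi k (deriv f) s = - (nabla k *\<^sub>v Phi k f s)
           + vec k (\<lambda>i. \<Sum>h<k. of_nat (k - h) * sc s h *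
                 deriv (\<lambda>t. Phi k f (s(h + 1 := t)) $ i) (s (h + 1)))"
    (is "_ = - ?N + vec k ?D")
proof (rule eq_vecI)
  define R where "R = root_bound k s + 1"
  define c where "c = 2 * of_real pi * \<i>"
  have R: "encloses_roots k s R"
    unfolding R_def by (rule encloses_roots_if_root_bound_le) simp
  fix i assume "i < dim_vec (- ?N + vec k ?D)"
  then have "i < k"
    by simp
  have dim_N: "dim_vec ?N = k"
    by (simp add: nabla_def)
  have N: "?N $ i = of_nat i * (contour_integral (circlepath 0 R) (\<lambda>z. f z * z ^ (i - 1) / Ps k s z) / c)"
    using nabla_mult_vec_nth[OF \<open>i < k\<close> Phi_carrier] Phi_nth[OF f R, of "i - 1"] \<open>i < k\<close>
    by (cases "i = 0") (simp_all add: c_def)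
  have "Phi k (deriv f) s $ i
      = contour_integral (circlepath 0 R) (\<lambda>z. deriv f z * z ^ i / Ps k s z) / c"
    unfolding c_def by (rule Phi_nth[OF holomorphic_deriv[OF f open_UNIV] R \<open>i < k\<close>])
  also have "\<dots> = - ?N $ i
      + contour_integral (circlepath 0 R) (\<lambda>z. f z * z ^ i * Ps_deriv k s z / Ps k s z ^ 2) / c"
    unfolding contour_integral_deriv_div_Ps[OF f R] N by (simp add: diff_divide_distrib)
  also have "\<dots> = - ?N $ i + ?D i"
    unfolding sum_coordinate_derivatives_Phi_nth[OF f \<open>i < k\<close>] R_def c_def ..
  also have "\<dots> = (- ?N + vec k ?D) $ i"
    using \<open>i < k\<close> dim_N by (simp only: index_add_vec index_uminus_vec index_vec dim_vec)
  finally show "Phi k (deriv f) s $ i = (- ?N + vec k ?D) $ i" .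
qed (simp add: nabla_def)

theorem mainTheorem8:
  fixes k :: nat and f :: "complex \<Rightarrow> complex"
  assumes "k \<ge> 2" and "f holomorphic_on UNIV"
  shows "(\<forall>g s. g holomorphic_on UNIV \<longrightarrow>
            Phi k (\<lambda>z. g z * f z) s = mat_fun g (compA k s) *\<^sub>v Phi k f s)
       \<and> (\<forall>s. Phi k f s = mat_fun f (compA k s) *\<^sub>v Phi k (\<lambda>_. 1) s)
       \<and> (\<forall>s. Phi k (deriv f) s =
              - (nabla k *\<^sub>v Phi k f s)
              + vec k (\<lambda>i. \<Sum>h<k. of_nat (k - h) * sc s h *
                    deriv (\<lambda>t. Phi k f (s(h + 1 := t)) $ i) (s (h + 1))))"
proof -
  have "Phi k f s = mat_fun f (compA k s) *\<^sub>v Phi k (\<lambda>_. 1) s" for s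
    using Phi_entire_mult[of "\<lambda>_. 1" f k s] assms(2) by simp
  then show ?thesis
    using Phi_entire_mult[OF assms(2)] Phi_deriv[OF assms(2)] by blast
qed

end
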